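(* Let $f(x,y)=\sum_{i=0}^rf_iy^ix^{r-i}$ and $g(x,y)=\sum_{j=0}^sg_jy^jx^{s-j}$ be homogeneous polynomials of degrees $r$ and $s$. Then for $\nu\ge1$ the $\nu$-th $q$-derivative (with respect to $x$) of their $q$-product is $$\big(f(x,y)*g(x,y)\big)^{(\nu)}=\sum_{l=0}^{\nu}{\nu\brack l}q^{(\nu-l)(r-l)}f^{(l)}(x,y)*g^{(\nu-l)}(x,y).$$
   Context: $q\ge2$ is a prime power. Gaussian binomial ${\nu\brack l}=\prod_{i=0}^{l-1}\frac{q^\nu-q^i}{q^l-q^i}$ ($=1$ for $l=0$). $q$-derivative: for a real function $f$, $f^{(1)}(x)=\frac{f(qx)-f(x)}{(q-1)x}$ for $x\ne0$; for $f(x,y)$, $f^{(\nu)}$ denotes the $\nu$-fold iterate of this operator applied in the variable $x$, with $f^{(0)}=f$. $q$-product: for homogeneous polynomials $a(x,y;m)=\sum_{i=0}^{d}a_i(m)y^ix^{d-i}$ and $b(x,y;m)=\sum_{j=0}^{e}b_j(m)y^jx^{e-j}$ of degrees $d,e$, whose coefficients are real functions of a parameter $m$ (zero for indices outside the given ranges; constants allowed), $a*b=\sum_{u=0}^{d+e}c_u(m)y^ux^{d+e-u}$ with $c_u(m)=\sum_{i=0}^uq^{ie}a_i(m)b_{u-i}(m-i)$. *)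

theory Defs
  imports Complex_Main "HOL-Computational_Algebra.Primes"
begin

definition gbinom :: "nat \<Rightarrow> nat \<Rightarrow> nat \<Rightarrow> real" where
  "gbinom q \<nu> l = (\<Prod>i<l. (real q ^ \<nu> - real q ^ i) / (real q ^ l - real q ^ i))"

definition qder :: "nat \<Rightarrow> (real \<Rightarrow> real \<Rightarrow> real) \<Rightarrow> (real \<Rightarrow> real \<Rightarrow> real)" where
  "qder q F = (\<lambda>x y. (F (real q * x) y - F x y) / ((real q - 1) * x))"

definition hpoly :: "(nat \<Rightarrow> int \<Rightarrow> real) \<Rightarrow> nat \<Rightarrow> int \<Rightarrow> real \<Rightarrow> real \<Rightarrow> real" where
  "hpoly a d m x y = (\<Sum>i\<le>d. a i m * y ^ i * x ^ (d - i))"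

definition trunc :: "(nat \<Rightarrow> int \<Rightarrow> real) \<Rightarrow> nat \<Rightarrow> nat \<Rightarrow> int \<Rightarrow> real" where
  "trunc a d i m = (if i \<le> d then a i m else 0)"

definition qprod :: "nat \<Rightarrow> (nat \<Rightarrow> int \<Rightarrow> real) \<Rightarrow> nat \<Rightarrow> (nat \<Rightarrow> int \<Rightarrow> real) \<Rightarrow> nat
    \<Rightarrow> (nat \<Rightarrow> int \<Rightarrow> real)" where
  "qprod q a d b e = (\<lambda>u m. \<Sum>i\<le>u. real q ^ (i * e) * trunc a d i m * trunc b e (u - i) (m - int i))"

text \<open>The (constant) coefficients of a function F viewed as a homogeneous polynomial of degree d
  (on x \<noteq> 0); used to read the q-derivatives f^(l), g^(l) as homogeneous polynomials.\<close>
definition hcoef :: "(real \<Rightarrow> real \<Rightarrow> real) \<Rightarrow> nat \<Rightarrow> nat \<Rightarrow> int \<Rightarrow> real" where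
  "hcoef F d = (SOME c. (\<forall>i m m'. c i m = c i m') \<and>
                        (\<forall>x y. x \<noteq> 0 \<longrightarrow> F x y = hpoly c d 0 x y))"

end

theory Submission
  imports Defs
begin

text \<open>Since the coefficients do not depend on the parameter, the q-product of f and g is the
  ordinary product f(x, q^s y) g(x, y). Its q-derivatives in x are therefore given by the
  q-Leibniz rule D^\<nu>(F G)(x) = \<Sum>_l [\<nu>, l] (D^l F)(q^(\<nu>-l) x) (D^(\<nu>-l) G)(x), which follows by
  induction from D(F G)(x) = F(q x) DG(x) + DF(x) G(x) and the q-Pascal identity.
  The derivative f^(l) is again homogeneous, of degree r - l, so evaluating it at
  (q^(\<nu>-l) x, q^s y) = q^(\<nu>-l) (x, q^(s-\<nu>+l) y) pulls out the factor q^((\<nu>-l)(r-l)), and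
  f^(l)(x, q^(s-\<nu>+l) y) g^(\<nu>-l)(x, y) is again a q-product. Terms with l > r or \<nu> - l > s
  vanish on both sides.\<close>

definition qdiff :: "nat \<Rightarrow> (real \<Rightarrow> real) \<Rightarrow> real \<Rightarrow> real" where
  "qdiff q h x = (h (real q * x) - h x) / ((real q - 1) * x)"

definition qint :: "nat \<Rightarrow> nat \<Rightarrow> real" where
  "qint q n = (real q ^ n - 1) / (real q - 1)"

definition qfalling :: "nat \<Rightarrow> nat \<Rightarrow> nat \<Rightarrow> real" where
  "qfalling q n l = (\<Prod>t<l. qint q (n - t))"

lemma qdiff_iterate_Suc:
  "(qdiff q ^^ Suc n) h x = ((qdiff q ^^ n) h (real q * x) - (qdiff q ^^ n) h x) / ((real q - 1) * x)"
  by (simp add: qdiff_def)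

lemma qder_iterate_eq_qdiff: "(qder q ^^ n) F x y = (qdiff q ^^ n) (\<lambda>x. F x y) x"
  by (induction n arbitrary: x) (simp_all add: qder_def qdiff_def)

lemma qdiff_sum: "qdiff q (\<lambda>x. \<Sum>i\<in>I. c i * h i x) = (\<lambda>x. \<Sum>i\<in>I. c i * qdiff q (h i) x)"
  by (simp add: qdiff_def fun_eq_iff sum_subtractf[symmetric] sum_divide_distrib right_diff_distrib)

lemma qdiff_iterate_sum:
  "(qdiff q ^^ n) (\<lambda>x. \<Sum>i\<in>I. c i * h i x) = (\<lambda>x. \<Sum>i\<in>I. c i * (qdiff q ^^ n) (h i) x)"
  by (induction n) (simp_all add: qdiff_sum)

lemma qdiff_mult: "qdiff q (\<lambda>x. A x * B x) x = A (real q * x) * qdiff q B x + qdiff q A x * B x"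
proof -
  have "(a1 * b1 - a0 * b0) / d = a1 * ((b1 - b0) / d) + ((a1 - a0) / d) * b0" for a1 a0 b1 b0 d :: real
    by (cases "d = 0") (simp_all add: field_simps)
  then show ?thesis unfolding qdiff_def .
qed

lemma qdiff_scale:
  assumes "c \<noteq> 0"
  shows "qdiff q (\<lambda>x. A (c * x)) x = c * qdiff q A (c * x)"
  using assms by (simp add: qdiff_def mult.left_commute)

lemma qint_Suc_split:
  assumes "j \<le> n"
  shows "qint q (Suc n) = qint q (n - j) + real q ^ (n - j) * qint q (Suc j)"
proof -
  have "real q ^ Suc n = real q ^ (n - j) * real q ^ Suc j"
    using assms by (simp flip: power_add)
  then have "real q ^ Suc n - 1 = (real q ^ (n - j) - 1) + real q ^ (n - j) * (real q ^ Suc j - 1)"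
    by (simp add: algebra_simps)
  then show ?thesis
    by (simp only: qint_def times_divide_eq_right add_divide_distrib)
qed

lemma diff_one_mult_qint: "q \<noteq> 1 \<Longrightarrow> (real q - 1) * qint q n = real q ^ n - 1"
  by (simp add: qint_def)

lemma qint_pos: "q \<ge> 2 \<Longrightarrow> 0 < n \<Longrightarrow> 0 < qint q n"
  unfolding qint_def by (simp add: one_less_power)

lemma qfalling_eq_0: "n < l \<Longrightarrow> qfalling q n l = 0"
  unfolding qfalling_def qint_def by (rule prod_zero) (auto intro!: bexI[of _ n])

lemma qfalling_self_pos: "q \<ge> 2 \<Longrightarrow> 0 < qfalling q n n"
  unfolding qfalling_def by (rule prod_pos) (simp add: qint_pos)

lemma qdiff_iterate_power:
  assumes "q \<ge> 2" "x \<noteq> 0"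
  shows "(qdiff q ^^ l) (\<lambda>x. x ^ p) x = qfalling q p l * x ^ (p - l)"
  using assms(2)
proof (induction l arbitrary: x)
  case 0
  then show ?case by (simp add: qfalling_def)
next
  case (Suc l)
  have qx: "real q * x \<noteq> 0" using Suc.prems assms(1) by simp
  have "(qdiff q ^^ Suc l) (\<lambda>x. x ^ p) x
      = (qfalling q p l * (real q * x) ^ (p - l) - qfalling q p l * x ^ (p - l)) / ((real q - 1) * x)"
    by (simp only: qdiff_iterate_Suc Suc.IH[OF qx] Suc.IH[OF Suc.prems])
  also have "\<dots> = qfalling q p (Suc l) * x ^ (p - Suc l)"
  proof (cases "l < p")
    case True
    then have "p - l = Suc (p - Suc l)" by simp
    then show ?thesis
      using assms Suc.prems by (simp add: qfalling_def qint_def power_mult_distrib field_simps)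
  qed (simp add: qfalling_def qint_def)
  finally show ?case .
qed

lemma gbinom_eq_0: "n < j \<Longrightarrow> gbinom q n j = 0"
  unfolding gbinom_def by (rule prod_zero) (auto intro!: bexI[of _ n])

lemma gbinom_eq_qfalling:
  assumes "q \<ge> 2"
  shows "gbinom q n j = qfalling q n j / qfalling q j j"
proof (cases "j \<le> n")
  case True
  have power_diff: "real q ^ a - real q ^ i = real q ^ i * (real q - 1) * qint q (a - i)" if "i \<le> a" for a i
  proof -
    have "real q ^ a = real q ^ i * real q ^ (a - i)"
      using that by (simp flip: power_add)
    moreover have "real q ^ i * (real q - 1) * qint q (a - i) = real q ^ i * (real q ^ (a - i) - 1)"
      using assms by (simp add: mult.assoc diff_one_mult_qint)
    ultimately show ?thesis
      by (simp add: algebra_simps)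
  qed
  have "gbinom q n j = (\<Prod>i<j. qint q (n - i) / qint q (j - i))"
    unfolding gbinom_def
  proof (rule prod.cong)
    fix i assume "i \<in> {..<j}"
    then show "(real q ^ n - real q ^ i) / (real q ^ j - real q ^ i) = qint q (n - i) / qint q (j - i)"
      using True assms by (simp add: power_diff)
  qed simp
  also have "\<dots> = qfalling q n j / qfalling q j j"
    unfolding qfalling_def by (rule prod_dividef)
  finally show ?thesis .
qed (simp add: gbinom_eq_0 qfalling_eq_0)

lemma gbinom_Suc_Suc:
  assumes "q \<ge> 2"
  shows "gbinom q (Suc n) (Suc j) = gbinom q n (Suc j) + real q ^ (n - j) * gbinom q n j"
proof (cases "j \<le> n")
  case True
  have "qfalling q (Suc n) (Suc j) = qint q (Suc n) * qfalling q n j"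
    "qfalling q (Suc j) (Suc j) = qint q (Suc j) * qfalling q j j"
    unfolding qfalling_def prod.lessThan_Suc_shift by simp_all
  moreover have "qfalling q n (Suc j) = qfalling q n j * qint q (n - j)"
    unfolding qfalling_def by simp
  moreover have "0 < qint q (Suc j)" "0 < qfalling q j j"
    using assms by (simp_all add: qint_pos qfalling_self_pos)
  ultimately show ?thesis
    using assms by (simp add: gbinom_eq_qfalling qint_Suc_split[OF True] field_simps)
qed (simp add: gbinom_eq_0)

lemma sum_gbinom_Suc:
  assumes "q \<ge> 2"
  shows "(\<Sum>k\<le>n. gbinom q n k * (T k + real q ^ (n - k) * T (Suc k)))
       = (\<Sum>k\<le>Suc n. gbinom q (Suc n) k * T k)"
proof -
  have gbinom_0: "gbinom q m 0 = 1" for m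
    by (simp add: gbinom_def)
  have "(\<Sum>k\<le>n. gbinom q n k * T k) = (\<Sum>k\<le>Suc n. gbinom q n k * T k)"
    by (simp add: gbinom_eq_0)
  also have "\<dots> = T 0 + (\<Sum>k\<le>n. gbinom q n (Suc k) * T (Suc k))"
    by (simp only: sum.atMost_Suc_shift) (simp add: gbinom_0)
  finally have shift: "(\<Sum>k\<le>n. gbinom q n k * T k) = T 0 + (\<Sum>k\<le>n. gbinom q n (Suc k) * T (Suc k))" .
  have "(\<Sum>k\<le>n. gbinom q n k * (T k + real q ^ (n - k) * T (Suc k)))
      = T 0 + (\<Sum>k\<le>n. (gbinom q n (Suc k) + real q ^ (n - k) * gbinom q n k) * T (Suc k))"
    by (simp add: ring_distribs sum.distrib shift) (simp add: mult_ac)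
  also have "\<dots> = (\<Sum>k\<le>Suc n. gbinom q (Suc n) k * T k)"
    by (simp only: sum.atMost_Suc_shift) (simp add: gbinom_0 gbinom_Suc_Suc[OF assms])
  finally show ?thesis .
qed

text \<open>No hypothesis x \<noteq> 0 is needed: at x = 0 every q-derivative is 0 since division by
  zero yields 0.\<close>

lemma qdiff_iterate_mult:
  assumes "q \<ge> 2"
  shows "(qdiff q ^^ n) (\<lambda>x. A x * B x)
       = (\<lambda>x. \<Sum>k\<le>n. gbinom q n k * ((qdiff q ^^ k) A (real q ^ (n - k) * x) * (qdiff q ^^ (n - k)) B x))"
proof (induction n)
  case 0
  then show ?case by (simp add: gbinom_def)
next
  case (Suc n)
  define T where "T k x = (qdiff q ^^ k) A (real q ^ (Suc n - k) * x) * (qdiff q ^^ (Suc n - k)) B x" for k x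
  have qdiff_term: "qdiff q (\<lambda>x. (qdiff q ^^ k) A (real q ^ (n - k) * x) * (qdiff q ^^ (n - k)) B x) x
      = T k x + real q ^ (n - k) * T (Suc k) x" if "k \<le> n" for k x
  proof -
    have "Suc n - k = Suc (n - k)" using that by simp
    then show ?thesis
      using assms by (simp add: T_def qdiff_mult qdiff_scale mult.assoc mult.left_commute[of "real q"])
  qed
  have "(qdiff q ^^ Suc n) (\<lambda>x. A x * B x) x = (\<Sum>k\<le>n. gbinom q n k * (T k x + real q ^ (n - k) * T (Suc k) x))" for x
    by (simp add: Suc.IH qdiff_sum qdiff_term)
  also have "\<dots> x = (\<Sum>k\<le>Suc n. gbinom q (Suc n) k * T k x)" for x
    by (rule sum_gbinom_Suc[OF assms])
  finally show ?case
    by (simp add: T_def fun_eq_iff)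
qed

lemma hpoly_scale: "hpoly a d m (t * x) (t * y) = t ^ d * hpoly a d m x y"
  unfolding hpoly_def sum_distrib_left
proof (rule sum.cong)
  fix i assume "i \<in> {..d}"
  then have "t ^ d = t ^ i * t ^ (d - i)"
    by (simp flip: power_add)
  then show "a i m * (t * y) ^ i * (t * x) ^ (d - i) = t ^ d * (a i m * y ^ i * x ^ (d - i))"
    by (simp add: power_mult_distrib mult_ac)
qed simp

lemma qder_iterate_hpoly:
  assumes "q \<ge> 2" "x \<noteq> 0"
  shows "(qder q ^^ l) (hpoly (\<lambda>i _. c i) d 0) x y
       = hpoly (\<lambda>i _. c i * qfalling q (d - i) l) (d - l) 0 x y"
proof -
  have "(qder q ^^ l) (hpoly (\<lambda>i _. c i) d 0) x y
      = (\<Sum>i\<le>d. c i * y ^ i * (qfalling q (d - i) l * x ^ (d - i - l)))"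
    unfolding qder_iterate_eq_qdiff hpoly_def
    by (simp add: qdiff_iterate_sum qdiff_iterate_power[OF assms])
  also have "\<dots> = (\<Sum>i\<le>d - l. c i * y ^ i * (qfalling q (d - i) l * x ^ (d - i - l)))"
    by (rule sum.mono_neutral_right) (auto simp: qfalling_eq_0)
  also have "\<dots> = hpoly (\<lambda>i _. c i * qfalling q (d - i) l) (d - l) 0 x y"
    unfolding hpoly_def by (simp add: add.commute mult_ac)
  finally show ?thesis .
qed

lemma qder_iterate_hpoly_eq_0:
  assumes "q \<ge> 2" "x \<noteq> 0" "d < l"
  shows "(qder q ^^ l) (hpoly (\<lambda>i _. c i) d 0) x y = 0"
  using assms by (simp add: qder_iterate_hpoly hpoly_def qfalling_eq_0)

lemma qder_iterate_hpoly_rescale: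
  assumes "q \<ge> 2" "x \<noteq> 0" "k \<le> e"
  shows "(qder q ^^ l) (hpoly (\<lambda>i _. c i) d 0) (real q ^ k * x) (real q ^ e * y)
       = real q powi (int k * (int d - int l)) * (qder q ^^ l) (hpoly (\<lambda>i _. c i) d 0) x (real q ^ (e - k) * y)"
proof (cases "l \<le> d")
  case True
  have shift: "real q ^ e * y = real q ^ k * (real q ^ (e - k) * y)"
    using assms(3) by (simp add: mult.assoc flip: power_add)
  have "int k * (int d - int l) = int (k * (d - l))"
    using True by (simp add: of_nat_diff)
  then have "real q powi (int k * (int d - int l)) = (real q ^ k) ^ (d - l)"
    by (simp only: power_int_of_nat power_mult)
  then show ?thesis
    unfolding shift using assms by (simp add: qder_iterate_hpoly hpoly_scale)
qed (use assms in \<open>simp add: qder_iterate_hpoly_eq_0\<close>)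

lemma hpoly_qprod_const:
  assumes "\<And>i m. a i m = a i 0" and "\<And>j m. b j m = b j 0"
  shows "hpoly (qprod q a d b e) (d + e) m x y = hpoly a d 0 x (real q ^ e * y) * hpoly b e 0 x y"
proof -
  define H where "H i j = real q ^ (i * e) * trunc a d i 0 * trunc b e j 0 * y ^ (i + j) * x ^ (d + e - (i + j))"
    for i j
  have "hpoly (qprod q a d b e) (d + e) m x y = (\<Sum>u\<le>d + e. \<Sum>i\<le>u. H i (u - i))"
    unfolding hpoly_def qprod_def H_def sum_distrib_right
    by (intro sum.cong refl) (simp add: trunc_def assms[of _ m] assms[of _ "m - _"])
  also have "\<dots> = (\<Sum>(i, j)\<in>{(i, j). i + j \<le> d + e}. H i j)"
    by (rule sum.triangle_reindex_eq[symmetric])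
  also have "\<dots> = (\<Sum>(i, j)\<in>{..d} \<times> {..e}. H i j)"
  proof (rule sum.mono_neutral_right)
    show "finite {(i, j). i + j \<le> d + e}"
      by (rule finite_subset[of _ "{..d + e} \<times> {..d + e}"]) auto
  qed (auto simp: H_def trunc_def split: if_splits)
  also have "\<dots> = (\<Sum>i\<le>d. \<Sum>j\<le>e. H i j)"
    by (rule sum.cartesian_product[symmetric])
  also have "\<dots> = hpoly a d 0 x (real q ^ e * y) * hpoly b e 0 x y"
    unfolding hpoly_def sum_product
  proof (intro sum.cong refl)
    fix i j assume "i \<in> {..d}" "j \<in> {..e}"
    then have "x ^ (d + e - (i + j)) = x ^ (d - i) * x ^ (e - j)"
      by (simp flip: power_add)
    then show "H i j = a i 0 * (real q ^ e * y) ^ i * x ^ (d - i) * (b j 0 * y ^ j * x ^ (e - j))"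
      using \<open>i \<in> {..d}\<close> \<open>j \<in> {..e}\<close>
      by (simp add: H_def trunc_def power_add power_mult_distrib mult.commute[of i e] power_mult mult_ac)
  qed
  finally show ?thesis .
qed

lemma hcoef_spec:
  assumes "\<And>x y. x \<noteq> 0 \<Longrightarrow> F x y = hpoly (\<lambda>i _. c i) d 0 x y"
  shows "(\<forall>i m m'. hcoef F d i m = hcoef F d i m') \<and> (\<forall>x y. x \<noteq> 0 \<longrightarrow> F x y = hpoly (hcoef F d) d 0 x y)"
  unfolding hcoef_def by (rule someI[of _ "\<lambda>i _. c i"]) (simp add: assms)

lemma hpoly_qprod_hcoef:
  assumes "\<And>x y. x \<noteq> 0 \<Longrightarrow> F x y = hpoly (\<lambda>i _. a i) d 0 x y"
    and "\<And>x y. x \<noteq> 0 \<Longrightarrow> G x y = hpoly (\<lambda>j _. b j) e 0 x y"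
    and "x \<noteq> 0"
  shows "hpoly (qprod q (hcoef F d) d (hcoef G e) e) (d + e) m x y = F x (real q ^ e * y) * G x y"
  using hcoef_spec[OF assms(1)] hcoef_spec[OF assms(2)] assms(3) by (simp add: hpoly_qprod_const)

lemma qder_iterate_hpoly_mult_eq_qprod:
  assumes q: "q \<ge> 2" and x: "x \<noteq> 0" and "l \<le> \<nu>"
  shows "(qder q ^^ l) (hpoly (\<lambda>i _. a i) d 0) (real q ^ (\<nu> - l) * x) (real q ^ e * y)
        * (qder q ^^ (\<nu> - l)) (hpoly (\<lambda>j _. b j) e 0) x y
       = real q powi ((int \<nu> - int l) * (int d - int l))
        * hpoly (qprod q (hcoef ((qder q ^^ l) (hpoly (\<lambda>i _. a i) d 0)) (d - l)) (d - l)
                         (hcoef ((qder q ^^ (\<nu> - l)) (hpoly (\<lambda>j _. b j) e 0)) (e - (\<nu> - l)))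
                         (e - (\<nu> - l)))
                ((d - l) + (e - (\<nu> - l))) m x y"
    (is "?F (real q ^ ?k * x) (real q ^ e * y) * ?G x y = _ * ?H")
proof -
  have qprod: "?H = ?F x (real q ^ (e - ?k) * y) * ?G x y"
    by (rule hpoly_qprod_hcoef[OF qder_iterate_hpoly[OF q] qder_iterate_hpoly[OF q] x])
  have "int \<nu> - int l = int ?k"
    using assms(3) by (simp add: of_nat_diff)
  moreover consider "?k \<le> e" | "e < ?k"
    by linarith
  then have "?F (real q ^ ?k * x) (real q ^ e * y) * ?G x y
      = real q powi (int ?k * (int d - int l)) * (?F x (real q ^ (e - ?k) * y) * ?G x y)"
  proof cases
    case 1
    then show ?thesis
      by (simp only: qder_iterate_hpoly_rescale[OF q x] mult.assoc)
  next
    case 2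
    then show ?thesis
      by (simp add: qder_iterate_hpoly_eq_0[OF q x])
  qed
  ultimately show ?thesis
    by (simp only: qprod)
qed

theorem lemma4:
  fixes q :: nat and f g :: "nat \<Rightarrow> real" and r s \<nu> :: nat
    and x y :: real and m :: int
  assumes "\<exists>p k. prime p \<and> 0 < k \<and> q = p ^ k"
    and "1 \<le> \<nu>"
    and "x \<noteq> 0"
  shows "(qder q ^^ \<nu>) (\<lambda>x y. hpoly (qprod q (\<lambda>i _. f i) r (\<lambda>j _. g j) s) (r + s) m x y) x y
       = (\<Sum>l\<le>\<nu>. gbinom q \<nu> l * real q powi ((int \<nu> - int l) * (int r - int l))
            * hpoly (qprod q (hcoef ((qder q ^^ l) (hpoly (\<lambda>i _. f i) r 0)) (r - l)) (r - l)
                             (hcoef ((qder q ^^ (\<nu> - l)) (hpoly (\<lambda>j _. g j) s 0)) (s - (\<nu> - l)))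
                             (s - (\<nu> - l)))
                    ((r - l) + (s - (\<nu> - l))) m x y)"
proof -
  obtain p k where "prime p" "0 < k" "q = p ^ k"
    using assms(1) by blast
  then have "2 \<le> p" "p \<le> q"
    using self_le_power[of p k] by (auto dest: prime_ge_2_nat)
  then have q: "q \<ge> 2"
    by linarith
  let ?A = "hpoly (\<lambda>i _. f i) r 0" and ?B = "hpoly (\<lambda>j _. g j) s 0"
  have "(qder q ^^ \<nu>) (\<lambda>x y. hpoly (qprod q (\<lambda>i _. f i) r (\<lambda>j _. g j) s) (r + s) m x y) x y
      = (qdiff q ^^ \<nu>) (\<lambda>z. ?A z (real q ^ s * y) * ?B z y) x"
    by (simp only: qder_iterate_eq_qdiff hpoly_qprod_const)
  also have "\<dots> = (\<Sum>l\<le>\<nu>. gbinom q \<nu> l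
      * ((qder q ^^ l) ?A (real q ^ (\<nu> - l) * x) (real q ^ s * y) * (qder q ^^ (\<nu> - l)) ?B x y))"
    by (simp only: qdiff_iterate_mult[OF q] qder_iterate_eq_qdiff)
  finally show ?thesis
    by (rule trans[OF _ sum.cong[OF refl]])
      (simp only: atMost_iff mult.assoc qder_iterate_hpoly_mult_eq_qprod[OF q assms(3), where m = m])
qed

end
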